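(* Let $\mathcal C=\{a_1C^1,\ldots,a_mC^m\}$ be a complete graph decomposition of a weighted graph $H=H(V,w)$, where $C^j$ has vertex set $V_j$. For each $u\in V$, let $\lambda(\mathcal C_u)$ be the sum of the smallest eigenvalues of the weighted graphs $a_jC^j$ with $u\in V_j$, and let $\lambda(\mathcal C)=\min_u\lambda(\mathcal C_u)$. Then $\lambda(H)\ge\lambda(\mathcal C)$. Moreover, equality holds if and only if there is a nonzero real vector $x=(x_u)_{u\in V}$ such that (1) $x_u=0$ whenever $\lambda(\mathcal C_u)>\lambda(\mathcal C)$; and (2) $x$ is constant on $V_j$ for every $j$ with $a_j<0$, and $\sum_{u\in V_j}x_u=0$ for every $j$ with $a_j>0$ and $|V_j|>1$.
   Context: A weighted graph $H(V,w)$ consists of a finite vertex set $V$ and a real function $w$ on unordered pairs $\{u,v\}$ of vertices (including $u=v$); its adjacency matrix $A(w)$ has $(u,v)$-entry $w(uv)$, and $\lambda(H)$ is its smallest eigenvalue. A decomposition of $H$ is a family of weighted graphs $H^j(V_j,w_j)$ with $V_j\subseteq V$ and $w(uv)=\sum_j w_j(uv)$ for all pairs, where $w_j(uv)=0$ if $u$ or $v$ is not in $V_j$. A complete graph decomposition is a decomposition in which each member is $a_jC^j$ with $a_j$ a nonzero real number and $C^j$ either the simple complete graph on $V_j$ ($|V_j|\ge 2$; weight $a_j$ on every pair of distinct vertices of $V_j$ and $0$ on loops) or the looped complete graph on $V_j$ ($|V_j|\ge1$; weight $a_j$ on every pair of vertices of $V_j$, including each loop $uu$). The complete graphs need not be subgraphs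 of $H$. *)

theory Defs
  imports Complex_Main
begin

text \<open>A weighted graph H(V,w) is a finite vertex set V together with a symmetric
  weight function w (w u u is the loop weight).  Its adjacency matrix is the
  V x V matrix with entries w u v.\<close>

definition is_eigenvalue :: "'a set \<Rightarrow> ('a \<Rightarrow> 'a \<Rightarrow> real) \<Rightarrow> real \<Rightarrow> bool" where
  "is_eigenvalue S M \<mu> \<longleftrightarrow>
     (\<exists>x :: 'a \<Rightarrow> real. (\<exists>u\<in>S. x u \<noteq> 0) \<and>
        (\<forall>u\<in>S. (\<Sum>v\<in>S. M u v * x v) = \<mu> * x u))"

definition smallest_eigenvalue :: "'a set \<Rightarrow> ('a \<Rightarrow> 'a \<Rightarrow> real) \<Rightarrow> real" where
  "smallest_eigenvalue S M = Min {\<mu>. is_eigenvalue S M \<mu>}"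

text \<open>Weight function of the complete graph a*C on vertex set Vj:
  simple (looped = False) or looped (looped = True).\<close>
definition complete_weight :: "real \<Rightarrow> 'a set \<Rightarrow> bool \<Rightarrow> 'a \<Rightarrow> 'a \<Rightarrow> real" where
  "complete_weight a Vj looped u v =
     (if u \<in> Vj \<and> v \<in> Vj \<and> (u \<noteq> v \<or> looped) then a else 0)"

definition complete_graph_decomposition ::
  "'a set \<Rightarrow> ('a \<Rightarrow> 'a \<Rightarrow> real) \<Rightarrow> nat \<Rightarrow> (nat \<Rightarrow> real) \<Rightarrow> (nat \<Rightarrow> 'a set) \<Rightarrow> (nat \<Rightarrow> bool) \<Rightarrow> bool"
  where
  "complete_graph_decomposition V w m a Vs lp \<longleftrightarrow>
     (\<forall>j<m. a j \<noteq> 0 \<and> Vs j \<subseteq> V \<and> (if lp j then card (Vs j) \<ge> 1 else card (Vs j) \<ge> 2)) \<and>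
     (\<forall>u\<in>V. \<forall>v\<in>V. w u v = (\<Sum>j<m. complete_weight (a j) (Vs j) (lp j) u v))"

definition lambda_Cu :: "nat \<Rightarrow> (nat \<Rightarrow> real) \<Rightarrow> (nat \<Rightarrow> 'a set) \<Rightarrow> (nat \<Rightarrow> bool) \<Rightarrow> 'a \<Rightarrow> real" where
  "lambda_Cu m a Vs lp u =
     (\<Sum>j\<in>{j. j < m \<and> u \<in> Vs j}. smallest_eigenvalue (Vs j) (complete_weight (a j) (Vs j) (lp j)))"

definition lambda_C :: "'a set \<Rightarrow> nat \<Rightarrow> (nat \<Rightarrow> real) \<Rightarrow> (nat \<Rightarrow> 'a set) \<Rightarrow> (nat \<Rightarrow> bool) \<Rightarrow> real" where
  "lambda_C V m a Vs lp = Min (lambda_Cu m a Vs lp ` V)"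

end

theory Submission imports Defs "Jordan_Normal_Form.Spectral_Radius" begin

text \<open>Write \<open>q\<^sub>M(x) = \<Sum>\<^sub>u\<^sub>,\<^sub>v x\<^sub>u M\<^sub>u\<^sub>v x\<^sub>v\<close>. The quadratic form of \<open>H\<close> is the sum of those of the members
  \<open>a\<^sub>j C\<^sup>j\<close>, and for one complete graph \<open>q\<^sub>j(x) \<ge> \<lambda>(a\<^sub>j C\<^sup>j) \<Sum>\<^sub>u\<^sub>\<in>\<^sub>V\<^sub>j x\<^sub>u\<^sup>2\<close>, with equality exactly when
  \<open>x\<close> is constant on \<open>V\<^sub>j\<close> (if \<open>a\<^sub>j < 0\<close>) or sums to zero on \<open>V\<^sub>j\<close> (if \<open>a\<^sub>j > 0\<close>, \<open>|V\<^sub>j| > 1\<close>):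
  this is Cauchy-Schwarz against the all-ones vector. Regrouping by vertices,
  \<open>q\<^sub>H(x) - \<lambda>(C) \<parallel>x\<parallel>\<^sup>2 = \<Sum>\<^sub>j (q\<^sub>j(x) - \<lambda>(a\<^sub>j C\<^sup>j) \<parallel>x|\<^sub>V\<^sub>j\<parallel>\<^sup>2) + \<Sum>\<^sub>u (\<lambda>(C\<^sub>u) - \<lambda>(C)) x\<^sub>u\<^sup>2\<close>
  is a sum of nonnegative terms. At an eigenvector of \<open>\<lambda>(H)\<close> the left side is
  \<open>(\<lambda>(H) - \<lambda>(C)) \<parallel>x\<parallel>\<^sup>2\<close>, which gives the inequality and, in case of equality, conditions (1)
  and (2). Conversely, a vector satisfying (1) and (2) is an eigenvector of every member for its
  smallest eigenvalue, hence an eigenvector of \<open>H\<close> for \<open>\<lambda>(C)\<close>.\<close>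

section \<open>Eigenvalues of symmetric weight functions\<close>

definition quad_form :: "'a set \<Rightarrow> ('a \<Rightarrow> 'a \<Rightarrow> real) \<Rightarrow> ('a \<Rightarrow> real) \<Rightarrow> real" where
  "quad_form S M x = (\<Sum>u\<in>S. x u * (\<Sum>v\<in>S. M u v * x v))"

lemma sum_set_eq_sum_nth:
  "distinct xs \<Longrightarrow> (\<Sum>v\<in>set xs. f v) = (\<Sum>j=0..<length xs. f (xs ! j))"
  by (simp add: sum_list_distinct_conv_sum_set[symmetric] sum_list_sum_nth)

lemma eigen_equation_iff_eigenvalue_mat:
  fixes M :: "'a \<Rightarrow> 'a \<Rightarrow> 'b::field"
  assumes d: "distinct xs"
  shows "(\<exists>x. (\<exists>u\<in>set xs. x u \<noteq> 0) \<and> (\<forall>u\<in>set xs. (\<Sum>v\<in>set xs. M u v * x v) = \<mu> * x u))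
     \<longleftrightarrow> eigenvalue (mat (length xs) (length xs) (\<lambda>(i, j). M (xs ! i) (xs ! j))) \<mu>"
    (is "?L \<longleftrightarrow> eigenvalue ?B \<mu>")
proof
  let ?n = "length xs"
  assume ?L
  then obtain x where nz: "\<exists>u\<in>set xs. x u \<noteq> 0"
    and eq: "\<forall>u\<in>set xs. (\<Sum>v\<in>set xs. M u v * x v) = \<mu> * x u" by blast
  define v where "v = vec ?n (\<lambda>j. x (xs ! j))"
  have "v \<in> carrier_vec ?n" by (simp add: v_def)
  moreover have "v \<noteq> 0\<^sub>v ?n"
    using nz by (auto simp: v_def in_set_conv_nth vec_eq_iff)
  moreover have "?B *\<^sub>v v = \<mu> \<cdot>\<^sub>v v"
  proof (rule eq_vecI)
    fix i assume "i < dim_vec (\<mu> \<cdot>\<^sub>v v)"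
    hence i: "i < ?n" by (simp add: v_def)
    have "(?B *\<^sub>v v) $ i = (\<Sum>j=0..<?n. M (xs ! i) (xs ! j) * x (xs ! j))"
      using i by (simp add: scalar_prod_def v_def)
    also have "\<dots> = (\<Sum>w\<in>set xs. M (xs ! i) w * x w)"
      by (simp add: sum_set_eq_sum_nth[OF d])
    also have "\<dots> = \<mu> * x (xs ! i)"
      using eq i by simp
    finally show "(?B *\<^sub>v v) $ i = (\<mu> \<cdot>\<^sub>v v) $ i" using i by (simp add: v_def)
  qed (simp add: v_def)
  ultimately show "eigenvalue ?B \<mu>"
    unfolding eigenvalue_def eigenvector_def by auto
next
  let ?n = "length xs"
  assume "eigenvalue ?B \<mu>"
  then obtain v where vc: "v \<in> carrier_vec ?n" and v0: "v \<noteq> 0\<^sub>v ?n"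
    and ev: "?B *\<^sub>v v = \<mu> \<cdot>\<^sub>v v"
    unfolding eigenvalue_def eigenvector_def by auto
  have b: "bij_betw ((!) xs) {..<?n} (set xs)" by (rule bij_betw_nth) (use d in auto)
  define x where "x u = v $ inv_into {..<?n} ((!) xs) u" for u
  have xv: "x (xs ! j) = v $ j" if "j < ?n" for j
    using b that unfolding x_def bij_betw_def by simp
  have "\<exists>u\<in>set xs. x u \<noteq> 0"
  proof (rule ccontr)
    assume "\<not> ?thesis"
    hence "v = 0\<^sub>v ?n" using vc xv by (intro eq_vecI) auto
    with v0 show False ..
  qed
  moreover have "(\<Sum>w\<in>set xs. M u w * x w) = \<mu> * x u" if "u \<in> set xs" for u
  proof -
    obtain i where i: "i < ?n" "xs ! i = u" using \<open>u \<in> set xs\<close> by (auto simp: in_set_conv_nth)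
    have "(\<Sum>w\<in>set xs. M u w * x w) = (?B *\<^sub>v v) $ i"
      using i vc xv by (simp add: sum_set_eq_sum_nth[OF d] scalar_prod_def)
    also have "\<dots> = \<mu> * x u" using ev i vc xv[of i] by simp
    finally show ?thesis .
  qed
  ultimately show ?L by blast
qed

lemma finite_eigenvalues:
  assumes "finite S"
  shows "finite {\<mu>. is_eigenvalue S M \<mu>}"
proof -
  obtain xs where d: "distinct xs" and s: "set xs = S"
    using finite_distinct_list[OF assms] by metis
  let ?B = "mat (length xs) (length xs) (\<lambda>(i, j). M (xs ! i) (xs ! j))"
  have "{\<mu>. is_eigenvalue S M \<mu>} = spectrum ?B"
    unfolding spectrum_def is_eigenvalue_def
    using eigen_equation_iff_eigenvalue_mat[OF d, of M] s by auto
  thus ?thesis using card_finite_spectrum(1)[of ?B "length xs"] by simp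
qed

text \<open>The Hermitian argument: \<open>y\<^sup>* M y\<close> is real and equals \<open>z \<parallel>y\<parallel>\<^sup>2\<close>.\<close>
lemma eigenvalue_of_symmetric_is_real:
  fixes M :: "'a \<Rightarrow> 'a \<Rightarrow> real"
  assumes fin: "finite S" and sym: "\<forall>u\<in>S. \<forall>v\<in>S. M u v = M v u"
    and nz: "\<exists>u\<in>S. y u \<noteq> 0"
    and eq: "\<forall>u\<in>S. (\<Sum>v\<in>S. complex_of_real (M u v) * y v) = z * y u"
  shows "Im z = 0"
proof -
  define L where "L = (\<Sum>u\<in>S. cnj (y u) * (\<Sum>v\<in>S. complex_of_real (M u v) * y v))"
  define N where "N = (\<Sum>u\<in>S. (cmod (y u))\<^sup>2)"
  have "N > 0"
    using nz fin unfolding N_def by (auto intro: sum_pos2)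
  have "L = (\<Sum>u\<in>S. z * (y u * cnj (y u)))"
    unfolding L_def using eq by (intro sum.cong) auto
  also have "\<dots> = z * complex_of_real N"
    unfolding N_def by (simp add: sum_distrib_left complex_norm_square[symmetric])
  finally have "L = z * complex_of_real N" .
  moreover have "cnj L = L"
  proof -
    have "cnj L = (\<Sum>u\<in>S. \<Sum>v\<in>S. y u * complex_of_real (M u v) * cnj (y v))"
      unfolding L_def by (simp add: sum_distrib_left mult_ac)
    also have "\<dots> = (\<Sum>v\<in>S. \<Sum>u\<in>S. y u * complex_of_real (M u v) * cnj (y v))"
      by (rule sum.swap)
    also have "\<dots> = L"
      unfolding L_def using sym by (auto simp: sum_distrib_left mult_ac intro!: sum.cong)
    finally show ?thesis .
  qed
  ultimately have "Im z * N = 0" by (simp add: complex_eq_iff)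
  with \<open>N > 0\<close> show ?thesis by simp
qed

lemma symmetric_has_eigenvalue:
  fixes M :: "'a \<Rightarrow> 'a \<Rightarrow> real"
  assumes fin: "finite S" and ne: "S \<noteq> {}" and sym: "\<forall>u\<in>S. \<forall>v\<in>S. M u v = M v u"
  shows "\<exists>\<mu>. is_eigenvalue S M \<mu>"
proof -
  obtain xs where d: "distinct xs" and s: "set xs = S"
    using finite_distinct_list[OF fin] by metis
  let ?Mc = "\<lambda>u v. complex_of_real (M u v)"
  let ?B = "mat (length xs) (length xs) (\<lambda>(i, j). ?Mc (xs ! i) (xs ! j))"
  have "spectrum ?B \<noteq> {}" using ne s by (intro spectrum_non_empty) auto
  then obtain z where "eigenvalue ?B z" unfolding spectrum_def by auto
  then obtain y where ynz: "\<exists>u\<in>S. y u \<noteq> 0"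
    and yeq: "\<forall>u\<in>S. (\<Sum>v\<in>S. ?Mc u v * y v) = z * y u"
    using eigen_equation_iff_eigenvalue_mat[OF d, of ?Mc z] s by blast
  have "Im z = 0" by (rule eigenvalue_of_symmetric_is_real[OF fin sym ynz yeq])
  \<comment> \<open>Real and imaginary parts of \<open>y\<close> both satisfy the real eigen-equation; one of them is nonzero.\<close>
  have eqf: "(\<Sum>v\<in>S. M u v * f (y v)) = Re z * f (y u)" if "u \<in> S" "f = Re \<or> f = Im" for u f
  proof -
    have "f (\<Sum>v\<in>S. ?Mc u v * y v) = f (z * y u)" using yeq that(1) by simp
    thus ?thesis using that(2) \<open>Im z = 0\<close> by auto
  qed
  obtain u0 where u0: "u0 \<in> S" "y u0 \<noteq> 0" using ynz by blast
  hence "Re (y u0) \<noteq> 0 \<or> Im (y u0) \<noteq> 0" using complex_eqI by force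
  then obtain f where "f = Re \<or> f = Im" "f (y u0) \<noteq> 0" by blast
  thus ?thesis
    unfolding is_eigenvalue_def using eqf u0(1)
    by (intro exI[of _ "Re z"] exI[of _ "\<lambda>v. f (y v)"]) auto
qed

lemma
  fixes M :: "'a \<Rightarrow> 'a \<Rightarrow> real"
  assumes "finite S" "S \<noteq> {}" "\<forall>u\<in>S. \<forall>v\<in>S. M u v = M v u"
  shows smallest_eigenvalue_is_eigenvalue: "is_eigenvalue S M (smallest_eigenvalue S M)"
    and smallest_eigenvalue_le: "is_eigenvalue S M \<mu> \<Longrightarrow> smallest_eigenvalue S M \<le> \<mu>"
proof -
  have "{\<mu>. is_eigenvalue S M \<mu>} \<noteq> {}" using symmetric_has_eigenvalue[OF assms] by auto
  with finite_eigenvalues[OF assms(1)] show "is_eigenvalue S M (smallest_eigenvalue S M)"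
    unfolding smallest_eigenvalue_def using Min_in by fastforce
  show "is_eigenvalue S M \<mu> \<Longrightarrow> smallest_eigenvalue S M \<le> \<mu>"
    unfolding smallest_eigenvalue_def using finite_eigenvalues[OF assms(1)] by simp
qed

lemma smallest_eigenvalue_eqI:
  assumes "finite S" "is_eigenvalue S M e" "\<And>\<mu>. is_eigenvalue S M \<mu> \<Longrightarrow> e \<le> \<mu>"
  shows "smallest_eigenvalue S M = e"
  unfolding smallest_eigenvalue_def using assms finite_eigenvalues[OF assms(1), of M]
  by (intro Min_eqI) auto

lemma quad_form_eigenvector:
  assumes "\<forall>u\<in>S. (\<Sum>v\<in>S. M u v * x v) = \<mu> * x u"
  shows "quad_form S M x = \<mu> * (\<Sum>u\<in>S. (x u)\<^sup>2)"
  using assms by (simp add: quad_form_def sum_distrib_left power2_eq_square mult_ac)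

lemma eigenvalue_lower_bound:
  assumes "finite S" "is_eigenvalue S M \<mu>" "\<And>x. quad_form S M x \<ge> c * (\<Sum>u\<in>S. (x u)\<^sup>2)"
  shows "c \<le> \<mu>"
proof -
  obtain x where nz: "\<exists>u\<in>S. x u \<noteq> 0" and eq: "\<forall>u\<in>S. (\<Sum>v\<in>S. M u v * x v) = \<mu> * x u"
    using assms(2) unfolding is_eigenvalue_def by blast
  have "c * (\<Sum>u\<in>S. (x u)\<^sup>2) \<le> \<mu> * (\<Sum>u\<in>S. (x u)\<^sup>2)"
    using assms(3)[of x] quad_form_eigenvector[OF eq] by simp
  moreover have "(\<Sum>u\<in>S. (x u)\<^sup>2) > 0" using assms(1) nz by (auto intro: sum_pos2)
  ultimately show ?thesis by simp
qed

section \<open>Complete graphs\<close>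

lemma card_mult_sum_squares_minus_square_sum:
  fixes x :: "'a \<Rightarrow> real"
  assumes "finite S"
  shows "card S * (\<Sum>u\<in>S. (x u)\<^sup>2) - (sum x S)\<^sup>2 = (\<Sum>u\<in>S. \<Sum>v\<in>S. (x u - x v)\<^sup>2) / 2"
proof -
  have "(\<Sum>u\<in>S. \<Sum>v\<in>S. (x u - x v)\<^sup>2) = (\<Sum>u\<in>S. \<Sum>v\<in>S. (x u)\<^sup>2 + (x v)\<^sup>2 - 2 * (x u * x v))"
    by (simp add: power2_diff mult.assoc)
  also have "\<dots> = 2 * (card S * (\<Sum>u\<in>S. (x u)\<^sup>2)) - 2 * (sum x S)\<^sup>2"
    by (simp add: sum.distrib sum_subtractf sum_distrib_left[symmetric] sum_distrib_right[symmetric]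
         power2_eq_square sum.swap[of "\<lambda>u v. (x v)\<^sup>2"] algebra_simps)
       (simp add: sum_distrib_left mult_ac)
  finally show ?thesis by simp
qed

lemma
  fixes x :: "'a \<Rightarrow> real"
  assumes "finite S"
  shows square_sum_le_card_mult_sum_squares: "(sum x S)\<^sup>2 \<le> card S * (\<Sum>u\<in>S. (x u)\<^sup>2)"
    and square_sum_eq_card_mult_sum_squares_iff:
      "(sum x S)\<^sup>2 = card S * (\<Sum>u\<in>S. (x u)\<^sup>2) \<longleftrightarrow> (\<forall>u\<in>S. \<forall>v\<in>S. x u = x v)"
proof -
  have "(\<Sum>u\<in>S. \<Sum>v\<in>S. (x u - x v)\<^sup>2) \<ge> 0" by (intro sum_nonneg) auto
  thus "(sum x S)\<^sup>2 \<le> card S * (\<Sum>u\<in>S. (x u)\<^sup>2)"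
    using card_mult_sum_squares_minus_square_sum[OF assms, of x] by simp
  have "(\<Sum>u\<in>S. \<Sum>v\<in>S. (x u - x v)\<^sup>2) = 0 \<longleftrightarrow> (\<forall>u\<in>S. \<forall>v\<in>S. x u = x v)"
    using assms by (simp add: sum_nonneg_eq_0_iff sum_nonneg)
  thus "(sum x S)\<^sup>2 = card S * (\<Sum>u\<in>S. (x u)\<^sup>2) \<longleftrightarrow> (\<forall>u\<in>S. \<forall>v\<in>S. x u = x v)"
    using card_mult_sum_squares_minus_square_sum[OF assms, of x] by linarith
qed

lemma complete_weight_row:
  assumes "finite S" "u \<in> S"
  shows "(\<Sum>v\<in>S. complete_weight a S lp u v * x v) =
    (if lp then a * sum x S else a * (sum x S - x u))"
proof (cases lp)
  case True
  have "(\<Sum>v\<in>S. complete_weight a S lp u v * x v) = (\<Sum>v\<in>S. a * x v)"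
    using assms True by (intro sum.cong) (auto simp: complete_weight_def)
  thus ?thesis using True by (simp add: sum_distrib_left)
next
  case False
  have "(\<Sum>v\<in>S. complete_weight a S lp u v * x v) =
        (\<Sum>v\<in>S. a * x v - (if v = u then a * x u else 0))"
    using assms False by (intro sum.cong) (auto simp: complete_weight_def)
  thus ?thesis using assms False by (simp add: sum_subtractf sum_distrib_left algebra_simps)
qed

lemma quad_form_complete_weight:
  assumes "finite S"
  shows "quad_form S (complete_weight a S lp) x =
    (if lp then a * (sum x S)\<^sup>2 else a * ((sum x S)\<^sup>2 - (\<Sum>u\<in>S. (x u)\<^sup>2)))"
proof -
  have "quad_form S (complete_weight a S lp) x =
        (\<Sum>u\<in>S. x u * (if lp then a * sum x S else a * (sum x S - x u)))"
    unfolding quad_form_def using assms by (intro sum.cong) (simp_all add: complete_weight_row)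
  thus ?thesis
    by (cases lp) (simp_all add: sum_distrib_left sum_distrib_right power2_eq_square
        sum_subtractf algebra_simps)
qed

text \<open>The spectrum of \<open>a J\<^sub>n\<close> is \<open>{a n, 0}\<close> and that of \<open>a (J\<^sub>n - I)\<close> is \<open>{a (n - 1), -a}\<close>,
  where \<open>0\<close> and \<open>-a\<close> occur only for \<open>n \<ge> 2\<close>.\<close>
definition complete_eigenvalue :: "real \<Rightarrow> nat \<Rightarrow> bool \<Rightarrow> real" where
  "complete_eigenvalue a n lp =
     (if lp then (if a > 0 \<and> n \<ge> 2 then 0 else a * real n)
      else (if a > 0 then - a else a * (real n - 1)))"

definition complete_extremal :: "real \<Rightarrow> 'a set \<Rightarrow> ('a \<Rightarrow> real) \<Rightarrow> bool" where
  "complete_extremal a S x \<longleftrightarrow>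
     (a < 0 \<longrightarrow> (\<forall>u\<in>S. \<forall>v\<in>S. x u = x v)) \<and> (a > 0 \<and> card S > 1 \<longrightarrow> sum x S = 0)"

lemma complete_weight_cases:
  fixes a :: real
  assumes "a \<noteq> 0" and "if lp then card S \<ge> 1 else card S \<ge> 2"
  obtains "a < 0" | "a > 0" "card S \<ge> 2" | "a > 0" "card S = 1" "lp"
proof (cases "a < 0")
  case False
  with assms(1) have "a > 0" by simp
  show ?thesis
  proof (cases "card S \<ge> 2")
    case False
    with assms(2) have "lp" "card S = 1" by (cases lp; simp)+
    with \<open>a > 0\<close> show ?thesis using that(3) by blast
  qed (use \<open>a > 0\<close> that(2) in blast)
qed (rule that(1))

lemma quad_form_complete_weight_gap:
  fixes a :: real and x :: "'a \<Rightarrow> real"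
  assumes "finite S" and "a \<noteq> 0" and "if lp then card S \<ge> 1 else card S \<ge> 2"
  shows "quad_form S (complete_weight a S lp) x - complete_eigenvalue a (card S) lp * (\<Sum>u\<in>S. (x u)\<^sup>2) =
    (if a < 0 then - a * (card S * (\<Sum>u\<in>S. (x u)\<^sup>2) - (sum x S)\<^sup>2)
     else if card S \<ge> 2 then a * (sum x S)\<^sup>2 else 0)"
proof -
  note qf = quad_form_complete_weight[OF assms(1), of a lp x]
  from assms(2,3) show ?thesis
  proof (cases rule: complete_weight_cases)
    case 1
    thus ?thesis using qf by (cases lp) (simp_all add: complete_eigenvalue_def algebra_simps)
  next
    case 2
    thus ?thesis using qf by (cases lp) (simp_all add: complete_eigenvalue_def algebra_simps)
  next
    case 3
    then obtain u where "S = {u}" by (auto simp: card_1_singleton_iff)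
    with 3 show ?thesis using qf by (simp add: complete_eigenvalue_def power2_eq_square)
  qed
qed

lemma
  fixes a :: real and x :: "'a \<Rightarrow> real"
  assumes "finite S" and "a \<noteq> 0" and "if lp then card S \<ge> 1 else card S \<ge> 2"
  shows quad_form_complete_weight_ge:
      "quad_form S (complete_weight a S lp) x \<ge> complete_eigenvalue a (card S) lp * (\<Sum>u\<in>S. (x u)\<^sup>2)"
    and quad_form_complete_weight_eq_iff:
      "quad_form S (complete_weight a S lp) x = complete_eigenvalue a (card S) lp * (\<Sum>u\<in>S. (x u)\<^sup>2)
        \<longleftrightarrow> complete_extremal a S x"
proof -
  define Q where "Q = (\<Sum>u\<in>S. (x u)\<^sup>2)"
  define s where "s = sum x S"
  define gap where "gap = (if a < 0 then - a * (card S * Q - s\<^sup>2) else if card S \<ge> 2 then a * s\<^sup>2 else 0)"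
  have q: "quad_form S (complete_weight a S lp) x - complete_eigenvalue a (card S) lp * Q = gap"
    unfolding gap_def Q_def s_def by (rule quad_form_complete_weight_gap[OF assms])
  have D: "0 \<le> card S * Q - s\<^sup>2"
    using square_sum_le_card_mult_sum_squares[OF assms(1), of x] unfolding Q_def s_def by linarith
  have D0: "card S * Q - s\<^sup>2 = 0 \<longleftrightarrow> (\<forall>u\<in>S. \<forall>v\<in>S. x u = x v)"
    using square_sum_eq_card_mult_sum_squares_iff[OF assms(1), of x] unfolding Q_def s_def by linarith
  have "0 \<le> gap"
    unfolding gap_def using D assms(2) by (auto intro: mult_nonpos_nonneg)
  with q show "complete_eigenvalue a (card S) lp * (\<Sum>u\<in>S. (x u)\<^sup>2) \<le> quad_form S (complete_weight a S lp) x"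
    by (simp add: Q_def)
  have "gap = 0 \<longleftrightarrow> complete_extremal a S x"
  proof (cases "a < 0")
    case True
    thus ?thesis using D0 unfolding gap_def complete_extremal_def by simp
  next
    case False
    with assms(2) have "a > 0" by simp
    thus ?thesis unfolding gap_def complete_extremal_def s_def by auto
  qed
  with q show "quad_form S (complete_weight a S lp) x = complete_eigenvalue a (card S) lp * (\<Sum>u\<in>S. (x u)\<^sup>2)
        \<longleftrightarrow> complete_extremal a S x"
    unfolding Q_def by (metis eq_iff_diff_eq_0)
qed

lemma complete_weight_eigen_equation:
  fixes a :: real and x :: "'a \<Rightarrow> real"
  assumes "finite S" and "a \<noteq> 0" and "if lp then card S \<ge> 1 else card S \<ge> 2"
    and "complete_extremal a S x" and "u \<in> S"
  shows "(\<Sum>v\<in>S. complete_weight a S lp u v * x v) = complete_eigenvalue a (card S) lp * x u"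
proof -
  from assms(2,3) have "(if lp then a * sum x S else a * (sum x S - x u)) = complete_eigenvalue a (card S) lp * x u"
  proof (cases rule: complete_weight_cases)
    case 1
    hence "sum x S = (\<Sum>v\<in>S. x u)"
      using assms(4,5) unfolding complete_extremal_def by (intro sum.cong) blast+
    hence "sum x S = card S * x u" by simp
    with 1 show ?thesis by (cases lp) (simp_all add: complete_eigenvalue_def algebra_simps)
  next
    case 2
    hence "sum x S = 0" using assms(4) unfolding complete_extremal_def by simp
    with 2 show ?thesis by (simp add: complete_eigenvalue_def)
  next
    case 3
    hence "S = {u}" using assms(5) by (auto simp: card_1_singleton_iff)
    with 3 show ?thesis by (simp add: complete_eigenvalue_def)
  qed
  with complete_weight_row[OF assms(1,5)] show ?thesis by (rule trans)
qed

lemma complete_extremal_exists: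
  assumes "finite S" and "S \<noteq> {}"
  shows "\<exists>x. (\<exists>u\<in>S. x u \<noteq> 0) \<and> complete_extremal a S x"
proof (cases "a > 0 \<and> card S \<ge> 2")
  case True
  then obtain u0 u1 where u: "u0 \<in> S" "u1 \<in> S" "u0 \<noteq> u1"
    using assms(1) card_le_Suc0_iff_eq[of S] by force
  define x :: "'a \<Rightarrow> real" where "x v = (if v = u0 then 1 else 0) - (if v = u1 then 1 else 0)" for v
  have "sum x S = 0" unfolding x_def using assms(1) u by (simp add: sum_subtractf)
  moreover have "x u0 \<noteq> 0" using u by (simp add: x_def)
  ultimately show ?thesis using True u unfolding complete_extremal_def by auto
next
  case False
  thus ?thesis using assms(2) unfolding complete_extremal_def by (intro exI[of _ "\<lambda>_. 1"]) auto
qed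

lemma smallest_eigenvalue_complete_weight:
  assumes "finite S" and "a \<noteq> 0" and "if lp then card S \<ge> 1 else card S \<ge> 2"
  shows "smallest_eigenvalue S (complete_weight a S lp) = complete_eigenvalue a (card S) lp"
proof (rule smallest_eigenvalue_eqI[OF assms(1)])
  have "S \<noteq> {}" using assms(1,3) by (auto split: if_splits)
  then obtain x where "\<exists>u\<in>S. x u \<noteq> 0" and "complete_extremal a S x"
    using complete_extremal_exists[OF assms(1)] by blast
  thus "is_eigenvalue S (complete_weight a S lp) (complete_eigenvalue a (card S) lp)"
    unfolding is_eigenvalue_def using complete_weight_eigen_equation[OF assms] by blast
next
  fix \<mu> assume "is_eigenvalue S (complete_weight a S lp) \<mu>"
  thus "complete_eigenvalue a (card S) lp \<le> \<mu>"
    by (rule eigenvalue_lower_bound[OF assms(1)]) (rule quad_form_complete_weight_ge[OF assms])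
qed

section \<open>Complete graph decompositions\<close>

context
  fixes V :: "'a set" and w :: "'a \<Rightarrow> 'a \<Rightarrow> real"
    and m :: nat and a :: "nat \<Rightarrow> real" and Vs :: "nat \<Rightarrow> 'a set" and lp :: "nat \<Rightarrow> bool"
  assumes finite_V: "finite V" and decomposition: "complete_graph_decomposition V w m a Vs lp"
begin

abbreviation member_weight :: "nat \<Rightarrow> 'a \<Rightarrow> 'a \<Rightarrow> real" where
  "member_weight j \<equiv> complete_weight (a j) (Vs j) (lp j)"

abbreviation member_eigenvalue :: "nat \<Rightarrow> real" where
  "member_eigenvalue j \<equiv> smallest_eigenvalue (Vs j) (member_weight j)"

lemma decomposition_member:
  assumes "j < m"
  shows "a j \<noteq> 0" and "Vs j \<subseteq> V" and "if lp j then card (Vs j) \<ge> 1 else card (Vs j) \<ge> 2"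
    and "finite (Vs j)"
  using assms decomposition finite_V finite_subset
  unfolding complete_graph_decomposition_def by auto

lemma sum_members_swap:
  "(\<Sum>j<m. \<Sum>u\<in>Vs j. f j u) = (\<Sum>u\<in>V. \<Sum>j\<in>{j. j < m \<and> u \<in> Vs j}. f j u)"
proof -
  have "(\<Sum>u\<in>Vs j. f j u) = (\<Sum>u\<in>V. if u \<in> Vs j then f j u else 0)" if "j < m" for j
    using sum.inter_restrict[OF finite_V, of "f j" "Vs j"] decomposition_member(2)[OF that]
    by (simp add: Int_absorb1)
  hence "(\<Sum>j<m. \<Sum>u\<in>Vs j. f j u) = (\<Sum>j<m. \<Sum>u\<in>V. if u \<in> Vs j then f j u else 0)"
    by simp
  also have "\<dots> = (\<Sum>u\<in>V. \<Sum>j<m. if u \<in> Vs j then f j u else 0)"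
    by (rule sum.swap)
  also have "\<dots> = (\<Sum>u\<in>V. \<Sum>j\<in>{j. j < m \<and> u \<in> Vs j}. f j u)"
    by (simp add: sum.inter_filter[symmetric])
  finally show ?thesis .
qed

lemma row_decomposition:
  assumes "u \<in> V"
  shows "(\<Sum>v\<in>V. w u v * x v) = (\<Sum>j\<in>{j. j < m \<and> u \<in> Vs j}. \<Sum>v\<in>Vs j. member_weight j u v * x v)"
proof -
  have "(\<Sum>v\<in>V. w u v * x v) = (\<Sum>j<m. \<Sum>v\<in>V. member_weight j u v * x v)"
    using assms decomposition unfolding complete_graph_decomposition_def
    by (simp add: sum_distrib_right sum.swap[of _ V])
  also have "\<dots> = (\<Sum>j<m. if u \<in> Vs j then \<Sum>v\<in>Vs j. member_weight j u v * x v else 0)"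
  proof (intro sum.cong refl)
    fix j assume "j \<in> {..<m}"
    show "(\<Sum>v\<in>V. member_weight j u v * x v) =
        (if u \<in> Vs j then \<Sum>v\<in>Vs j. member_weight j u v * x v else 0)"
    proof (cases "u \<in> Vs j")
      case True
      have "(\<Sum>v\<in>V. member_weight j u v * x v) = (\<Sum>v\<in>Vs j. member_weight j u v * x v)"
        using decomposition_member(2)[of j] \<open>j \<in> {..<m}\<close> finite_V
        by (intro sum.mono_neutral_right) (auto simp: complete_weight_def)
      with True show ?thesis by simp
    qed (simp add: complete_weight_def)
  qed
  also have "\<dots> = (\<Sum>j\<in>{j. j < m \<and> u \<in> Vs j}. \<Sum>v\<in>Vs j. member_weight j u v * x v)"
    by (simp add: sum.inter_filter[symmetric])
  finally show ?thesis .
qed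

lemma quad_form_decomposition:
  "quad_form V w x = (\<Sum>j<m. quad_form (Vs j) (member_weight j) x)"
proof -
  have "quad_form V w x =
      (\<Sum>u\<in>V. \<Sum>j\<in>{j. j < m \<and> u \<in> Vs j}. x u * (\<Sum>v\<in>Vs j. member_weight j u v * x v))"
    unfolding quad_form_def by (intro sum.cong refl) (simp add: row_decomposition sum_distrib_left)
  also have "\<dots> = (\<Sum>j<m. quad_form (Vs j) (member_weight j) x)"
    unfolding quad_form_def sum_members_swap ..
  finally show ?thesis .
qed

lemma sum_lambda_Cu_squares:
  "(\<Sum>u\<in>V. lambda_Cu m a Vs lp u * (x u)\<^sup>2) = (\<Sum>j<m. member_eigenvalue j * (\<Sum>u\<in>Vs j. (x u)\<^sup>2))"
  unfolding lambda_Cu_def sum_distrib_left sum_distrib_right sum_members_swap ..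

lemma lambda_C_le_lambda_Cu: "u \<in> V \<Longrightarrow> lambda_C V m a Vs lp \<le> lambda_Cu m a Vs lp u"
  unfolding lambda_C_def using finite_V by simp

lemma quad_form_minus_lambda_C:
  "quad_form V w x - lambda_C V m a Vs lp * (\<Sum>u\<in>V. (x u)\<^sup>2) =
    (\<Sum>j<m. quad_form (Vs j) (member_weight j) x - member_eigenvalue j * (\<Sum>u\<in>Vs j. (x u)\<^sup>2)) +
    (\<Sum>u\<in>V. (lambda_Cu m a Vs lp u - lambda_C V m a Vs lp) * (x u)\<^sup>2)"
  unfolding sum_subtractf quad_form_decomposition sum_lambda_Cu_squares[symmetric]
  by (simp add: left_diff_distrib sum_subtractf sum_distrib_left)

lemma member_gap:
  assumes "j < m"
  shows "quad_form (Vs j) (member_weight j) x - member_eigenvalue j * (\<Sum>u\<in>Vs j. (x u)\<^sup>2) \<ge> 0"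
    and "quad_form (Vs j) (member_weight j) x - member_eigenvalue j * (\<Sum>u\<in>Vs j. (x u)\<^sup>2) = 0
      \<longleftrightarrow> complete_extremal (a j) (Vs j) x"
  using quad_form_complete_weight_ge[OF decomposition_member(4,1,3)[OF assms], of x]
    quad_form_complete_weight_eq_iff[OF decomposition_member(4,1,3)[OF assms], of x]
    smallest_eigenvalue_complete_weight[OF decomposition_member(4,1,3)[OF assms]]
  by simp_all

lemma quad_form_ge_lambda_C:
  "lambda_C V m a Vs lp * (\<Sum>u\<in>V. (x u)\<^sup>2) \<le> quad_form V w x"
proof -
  have "0 \<le> (\<Sum>j<m. quad_form (Vs j) (member_weight j) x - member_eigenvalue j * (\<Sum>u\<in>Vs j. (x u)\<^sup>2))"
    using member_gap(1) by (intro sum_nonneg) simp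
  moreover have "0 \<le> (\<Sum>u\<in>V. (lambda_Cu m a Vs lp u - lambda_C V m a Vs lp) * (x u)\<^sup>2)"
    using lambda_C_le_lambda_Cu by (intro sum_nonneg) simp
  ultimately show ?thesis using quad_form_minus_lambda_C[of x] by linarith
qed

lemma quad_form_eq_lambda_C_iff:
  "quad_form V w x = lambda_C V m a Vs lp * (\<Sum>u\<in>V. (x u)\<^sup>2) \<longleftrightarrow>
    (\<forall>u\<in>V. lambda_Cu m a Vs lp u > lambda_C V m a Vs lp \<longrightarrow> x u = 0) \<and>
    (\<forall>j<m. complete_extremal (a j) (Vs j) x)"
proof -
  let ?g = "\<lambda>j. quad_form (Vs j) (member_weight j) x - member_eigenvalue j * (\<Sum>u\<in>Vs j. (x u)\<^sup>2)"
  let ?h = "\<lambda>u. (lambda_Cu m a Vs lp u - lambda_C V m a Vs lp) * (x u)\<^sup>2"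
  have "sum ?g {..<m} = 0 \<longleftrightarrow> (\<forall>j\<in>{..<m}. ?g j = 0)"
    using member_gap(1) by (intro sum_nonneg_eq_0_iff) auto
  also have "\<dots> \<longleftrightarrow> (\<forall>j<m. complete_extremal (a j) (Vs j) x)"
    using member_gap(2) by blast
  finally have g: "sum ?g {..<m} = 0 \<longleftrightarrow> (\<forall>j<m. complete_extremal (a j) (Vs j) x)" .
  have h0: "?h u \<ge> 0" if "u \<in> V" for u
    using lambda_C_le_lambda_Cu[OF that] by simp
  have "sum ?h V = 0 \<longleftrightarrow> (\<forall>u\<in>V. ?h u = 0)"
    using h0 finite_V by (intro sum_nonneg_eq_0_iff) auto
  also have "\<dots> \<longleftrightarrow> (\<forall>u\<in>V. lambda_Cu m a Vs lp u > lambda_C V m a Vs lp \<longrightarrow> x u = 0)"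
    using lambda_C_le_lambda_Cu by (auto simp: less_le)
  finally have h: "sum ?h V = 0 \<longleftrightarrow> (\<forall>u\<in>V. lambda_Cu m a Vs lp u > lambda_C V m a Vs lp \<longrightarrow> x u = 0)" .
  have "quad_form V w x = lambda_C V m a Vs lp * (\<Sum>u\<in>V. (x u)\<^sup>2) \<longleftrightarrow> sum ?g {..<m} + sum ?h V = 0"
    using quad_form_minus_lambda_C[of x] by (metis eq_iff_diff_eq_0)
  also have "\<dots> \<longleftrightarrow> sum ?g {..<m} = 0 \<and> sum ?h V = 0"
    using member_gap(1) h0 by (intro add_nonneg_eq_0_iff sum_nonneg) auto
  finally show ?thesis using g h by blast
qed

lemma eigen_equation_lambda_C:
  assumes "\<forall>u\<in>V. lambda_Cu m a Vs lp u > lambda_C V m a Vs lp \<longrightarrow> x u = 0"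
    and "\<forall>j<m. complete_extremal (a j) (Vs j) x" and "u \<in> V"
  shows "(\<Sum>v\<in>V. w u v * x v) = lambda_C V m a Vs lp * x u"
proof -
  have "(\<Sum>v\<in>V. w u v * x v) = (\<Sum>j\<in>{j. j < m \<and> u \<in> Vs j}. member_eigenvalue j * x u)"
    unfolding row_decomposition[OF assms(3)]
  proof (intro sum.cong refl)
    fix j assume j: "j \<in> {j. j < m \<and> u \<in> Vs j}"
    thus "(\<Sum>v\<in>Vs j. member_weight j u v * x v) = member_eigenvalue j * x u"
      using complete_weight_eigen_equation[OF decomposition_member(4,1,3) assms(2)[rule_format]]
        smallest_eigenvalue_complete_weight[OF decomposition_member(4,1,3)] by simp
  qed
  also have "\<dots> = lambda_Cu m a Vs lp u * x u"
    unfolding lambda_Cu_def by (simp add: sum_distrib_right)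
  also have "\<dots> = lambda_C V m a Vs lp * x u"
    using assms(1,3) lambda_C_le_lambda_Cu[OF assms(3)] by force
  finally show ?thesis .
qed

lemma
  assumes "V \<noteq> {}" and "\<forall>u\<in>V. \<forall>v\<in>V. w u v = w v u"
  shows lambda_C_le_smallest_eigenvalue: "lambda_C V m a Vs lp \<le> smallest_eigenvalue V w"
    and smallest_eigenvalue_eq_lambda_C_iff: "smallest_eigenvalue V w = lambda_C V m a Vs lp \<longleftrightarrow>
      (\<exists>x. (\<exists>u\<in>V. x u \<noteq> 0) \<and>
        (\<forall>u\<in>V. lambda_Cu m a Vs lp u > lambda_C V m a Vs lp \<longrightarrow> x u = 0) \<and>
        (\<forall>j<m. complete_extremal (a j) (Vs j) x))"
proof -
  note smallest = smallest_eigenvalue_is_eigenvalue[OF finite_V assms]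
    smallest_eigenvalue_le[OF finite_V assms]
  show le: "lambda_C V m a Vs lp \<le> smallest_eigenvalue V w"
    using eigenvalue_lower_bound[OF finite_V smallest(1) quad_form_ge_lambda_C] .
  show "smallest_eigenvalue V w = lambda_C V m a Vs lp \<longleftrightarrow> (\<exists>x. (\<exists>u\<in>V. x u \<noteq> 0) \<and>
        (\<forall>u\<in>V. lambda_Cu m a Vs lp u > lambda_C V m a Vs lp \<longrightarrow> x u = 0) \<and>
        (\<forall>j<m. complete_extremal (a j) (Vs j) x))"
  proof
    assume eq: "smallest_eigenvalue V w = lambda_C V m a Vs lp"
    obtain x where "\<exists>u\<in>V. x u \<noteq> 0"
      and "\<forall>u\<in>V. (\<Sum>v\<in>V. w u v * x v) = lambda_C V m a Vs lp * x u"
      using smallest(1) unfolding eq is_eigenvalue_def by blast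
    with quad_form_eigenvector quad_form_eq_lambda_C_iff show "\<exists>x. (\<exists>u\<in>V. x u \<noteq> 0) \<and>
        (\<forall>u\<in>V. lambda_Cu m a Vs lp u > lambda_C V m a Vs lp \<longrightarrow> x u = 0) \<and>
        (\<forall>j<m. complete_extremal (a j) (Vs j) x)" by blast
  next
    assume "\<exists>x. (\<exists>u\<in>V. x u \<noteq> 0) \<and>
        (\<forall>u\<in>V. lambda_Cu m a Vs lp u > lambda_C V m a Vs lp \<longrightarrow> x u = 0) \<and>
        (\<forall>j<m. complete_extremal (a j) (Vs j) x)"
    hence "is_eigenvalue V w (lambda_C V m a Vs lp)"
      unfolding is_eigenvalue_def using eigen_equation_lambda_C by blast
    with smallest(2) le show "smallest_eigenvalue V w = lambda_C V m a Vs lp" by (simp add: eq_iff)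
  qed
qed

end

theorem mainTheorem2:
  fixes V :: "'a set" and w :: "'a \<Rightarrow> 'a \<Rightarrow> real"
    and m :: nat and a :: "nat \<Rightarrow> real" and Vs :: "nat \<Rightarrow> 'a set" and lp :: "nat \<Rightarrow> bool"
  assumes "finite V" and "V \<noteq> {}"
    and "\<forall>u v. w u v = w v u"
    and "complete_graph_decomposition V w m a Vs lp"
  shows "smallest_eigenvalue V w \<ge> lambda_C V m a Vs lp \<and>
    (smallest_eigenvalue V w = lambda_C V m a Vs lp \<longleftrightarrow>
      (\<exists>x :: 'a \<Rightarrow> real. (\<exists>u\<in>V. x u \<noteq> 0) \<and>
        (\<forall>u\<in>V. lambda_Cu m a Vs lp u > lambda_C V m a Vs lp \<longrightarrow> x u = 0) \<and>
        (\<forall>j<m. a j < 0 \<longrightarrow> (\<forall>u\<in>Vs j. \<forall>v\<in>Vs j. x u = x v)) \<and>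
        (\<forall>j<m. a j > 0 \<and> card (Vs j) > 1 \<longrightarrow> (\<Sum>u\<in>Vs j. x u) = 0)))"
proof -
  have sym: "\<forall>u\<in>V. \<forall>v\<in>V. w u v = w v u" using assms(3) by blast
  have "(\<forall>j<m. complete_extremal (a j) (Vs j) x) \<longleftrightarrow>
      (\<forall>j<m. a j < 0 \<longrightarrow> (\<forall>u\<in>Vs j. \<forall>v\<in>Vs j. x u = x v)) \<and>
      (\<forall>j<m. a j > 0 \<and> card (Vs j) > 1 \<longrightarrow> (\<Sum>u\<in>Vs j. x u) = 0)" for x :: "'a \<Rightarrow> real"
    unfolding complete_extremal_def by blast
  thus ?thesis
    using lambda_C_le_smallest_eigenvalue[OF assms(1,4,2) sym]
      smallest_eigenvalue_eq_lambda_C_iff[OF assms(1,4,2) sym] by simp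
qed

end
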